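(* Let $R$ be a $p$-adically complete ring, $a\in R$, $M$ a $p$-complete $R$-module and $\{\phi_n\}_{n\ge0}\subset\mathrm{End}_R(M)$ with $\phi_0=\mathrm{id}_M$. Then the following are equivalent: (1) for every $n\ge0$, $\displaystyle \phi_n=\sum_{l,m\ge0}\phi_m\circ\phi_{l+n}\,(1+aX)^{-l-n}(-1)^lX^{[l]}X^{[m]}$; (2) for every $n\ge1$, $\displaystyle \phi_n=\prod_{i=0}^{n-1}(\phi_1-ia)$.
   Context: The identity in (1) is an identity of formal divided-power series in one variable $X$ with coefficients in $\mathrm{End}_R(M)$: one expands $(1+aX)^{-N}=\sum_j\binom{-N}{j}a^jX^j$, uses $X^{[m]}=X^m/m!$, and compares the coefficients of $X^{[k]}$ for each $k\ge0$ (each such coefficient is a finite $\mathbb Z$-linear combination of products of the $\phi$'s and powers of $a$); the left side is the constant series $\phi_n$. *)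

theory Defs
  imports Complex_Main "HOL-Computational_Algebra.Primes"
begin

definition p_adically_complete_ring :: "nat \<Rightarrow> 'r::comm_ring_1 itself \<Rightarrow> bool" where
  "p_adically_complete_ring p _ \<longleftrightarrow>
     (\<forall>x::'r. (\<forall>n. (of_nat p) ^ n dvd x) \<longrightarrow> x = 0) \<and>
     (\<forall>s::nat \<Rightarrow> 'r. (\<forall>n. (of_nat p) ^ n dvd (s (Suc n) - s n)) \<longrightarrow>
        (\<exists>x. \<forall>n. (of_nat p) ^ n dvd (x - s n)))"

definition p_complete_module ::
  "nat \<Rightarrow> ('r::comm_ring_1 \<Rightarrow> 'm::ab_group_add \<Rightarrow> 'm) \<Rightarrow> bool" where
  "p_complete_module p scale \<longleftrightarrow>
     (\<forall>x::'m. (\<forall>n. \<exists>y. x = scale ((of_nat p) ^ n) y) \<longrightarrow> x = 0) \<and>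
     (\<forall>s::nat \<Rightarrow> 'm. (\<forall>n. \<exists>y. s (Suc n) - s n = scale ((of_nat p) ^ n) y) \<longrightarrow>
        (\<exists>x. \<forall>n. \<exists>y. x - s n = scale ((of_nat p) ^ n) y))"

text \<open>Coefficient of the divided power X^[k] of the right-hand side of identity (1),
  applied to a vector x.  With N = l + n one has
  (1+aX)^(-N) = sum_j binom(-N,j) a^j X^j = sum_j (-1)^j pochhammer N j a^j X^[j],
  and X^[j] X^[l] X^[m] = (k!/(j! l! m!)) X^[k] for j+l+m = k, where
  k!/(j! l! m!) = (k choose j) * ((k-j) choose l).\<close>
definition rhs1_coeff ::
  "('r::comm_ring_1 \<Rightarrow> 'm::ab_group_add \<Rightarrow> 'm) \<Rightarrow> 'r \<Rightarrow> (nat \<Rightarrow> 'm \<Rightarrow> 'm)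
     \<Rightarrow> nat \<Rightarrow> nat \<Rightarrow> 'm \<Rightarrow> 'm" where
  "rhs1_coeff scale a \<phi> n k x =
     (\<Sum>j\<le>k. \<Sum>l\<le>k - j.
        scale (of_int ((-1) ^ (j + l) * pochhammer (int (l + n)) j
                        * int ((k choose j) * ((k - j) choose l))) * a ^ j)
              (\<phi> (k - j - l) (\<phi> (l + n) x)))"

text \<open>Identity (1) for a given n, as an identity of divided power series:
  the constant series phi_n equals the right-hand side, coefficientwise.\<close>
definition identity1 ::
  "('r::comm_ring_1 \<Rightarrow> 'm::ab_group_add \<Rightarrow> 'm) \<Rightarrow> 'r \<Rightarrow> (nat \<Rightarrow> 'm \<Rightarrow> 'm) \<Rightarrow> nat \<Rightarrow> bool" where
  "identity1 scale a \<phi> n \<longleftrightarrow>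
     (\<forall>k x. rhs1_coeff scale a \<phi> n k x = (if k = 0 then \<phi> n x else 0))"

fun fall_prod ::
  "('r::comm_ring_1 \<Rightarrow> 'm::ab_group_add \<Rightarrow> 'm) \<Rightarrow> 'r \<Rightarrow> ('m \<Rightarrow> 'm) \<Rightarrow> nat \<Rightarrow> 'm \<Rightarrow> 'm" where
  "fall_prod scale a f 0 = id"
| "fall_prod scale a f (Suc n) =
     (\<lambda>x. f (fall_prod scale a f n x) - scale (of_nat n * a) (fall_prod scale a f n x))"

end

theory Submission
  imports Defs "HOL-Computational_Algebra.Polynomial"
begin

text \<open>The coefficient of X^[1] in (1) is phi_1 phi_n - phi_(n+1) - n a phi_n, so (1) forces the
  recursion phi_(n+1) = (phi_1 - n a) phi_n, i.e. (2).  Conversely, under (2) every phi_m is a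
  polynomial in phi_1, namely the falling product T(T - a)...(T - (m-1)a) evaluated at phi_1, and
  every coefficient of (1) becomes the image of a polynomial identity in a commutative ring.
  That identity follows from the Vandermonde convolution for falling products with step a,
  which collapses the inner sums to binomial(k,l) times one fixed falling product, and from
  the vanishing of the alternating sum of binomial(k,l) for k > 0.\<close>

definition falling_fact_step :: "'a::comm_ring_1 \<Rightarrow> 'a \<Rightarrow> nat \<Rightarrow> 'a" where
  "falling_fact_step A x s = (\<Prod>i<s. x - of_nat i * A)"

lemma falling_fact_step_0 [simp]: "falling_fact_step A x 0 = 1"
  by (simp add: falling_fact_step_def)

lemma falling_fact_step_Suc:
  "falling_fact_step A x (Suc s) = falling_fact_step A x s * (x - of_nat s * A)"
  by (simp add: falling_fact_step_def)

lemma falling_fact_step_add: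
  "falling_fact_step A x (p + q) = falling_fact_step A x p * falling_fact_step A (x - of_nat p * A) q"
  by (induction q) (simp_all add: falling_fact_step_Suc algebra_simps)

lemma falling_fact_step_neg_multiple:
  "falling_fact_step A (- (of_nat N * A)) j = of_int ((-1) ^ j * pochhammer (int N) j) * A ^ j"
  by (induction j) (simp_all add: falling_fact_step_Suc pochhammer_rec' algebra_simps)

lemma falling_fact_step_vandermonde:
  "falling_fact_step A (x + y) s =
     (\<Sum>j\<le>s. of_nat (s choose j) * falling_fact_step A x j * falling_fact_step A y (s - j))"
proof (induction s)
  case 0
  then show ?case by simp
next
  case (Suc s)
  define X where "X = falling_fact_step A x"
  define Y where "Y = falling_fact_step A y"
  have "falling_fact_step A (x + y) (Suc s) =
          (\<Sum>j\<le>s. of_nat (s choose j) * X j * Y (s - j) * (x + y - of_nat s * A))"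
    by (simp add: falling_fact_step_Suc Suc X_def Y_def sum_distrib_right)
  also have "\<dots> = (\<Sum>j\<le>s. of_nat (s choose j) * X (Suc j) * Y (s - j))
                 + (\<Sum>j\<le>s. of_nat (s choose j) * X j * Y (Suc (s - j)))"
    unfolding sum.distrib[symmetric]
  proof (rule sum.cong[OF refl])
    fix j assume "j \<in> {..s}"
    then have "of_nat s * A = of_nat j * A + of_nat (s - j) * A"
      by (simp add: of_nat_diff algebra_simps)
    then show "of_nat (s choose j) * X j * Y (s - j) * (x + y - of_nat s * A) =
               of_nat (s choose j) * X (Suc j) * Y (s - j) + of_nat (s choose j) * X j * Y (Suc (s - j))"
      by (simp add: X_def Y_def falling_fact_step_Suc algebra_simps)
  qed
  also have "(\<Sum>j\<le>s. of_nat (s choose j) * X j * Y (Suc (s - j))) =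
             X 0 * Y (Suc s) + (\<Sum>j\<le>s. of_nat (s choose Suc j) * X (Suc j) * Y (s - j))"
  proof -
    have "(\<Sum>j\<le>s. of_nat (s choose j) * X j * Y (Suc (s - j))) =
          (\<Sum>j\<le>Suc s. of_nat (s choose j) * X j * Y (Suc s - j))"
      by (simp add: Suc_diff_le binomial_eq_0)
    also have "\<dots> = X 0 * Y (Suc s) + (\<Sum>j\<le>s. of_nat (s choose Suc j) * X (Suc j) * Y (s - j))"
      by (subst sum.atMost_Suc_shift) simp
    finally show ?thesis .
  qed
  finally have "falling_fact_step A (x + y) (Suc s) = X 0 * Y (Suc s) +
      (\<Sum>j\<le>s. (of_nat (s choose j) + of_nat (s choose Suc j)) * X (Suc j) * Y (s - j))"
    by (simp add: sum.distrib algebra_simps)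
  also have "\<dots> = (\<Sum>j\<le>Suc s. of_nat (Suc s choose j) * X j * Y (Suc s - j))"
    by (subst sum.atMost_Suc_shift) simp
  finally show ?case by (simp add: X_def Y_def)
qed

lemma falling_fact_step_convolution_collapse:
  "(\<Sum>j\<le>s. of_nat (s choose j) * falling_fact_step A (- (of_nat N * A)) j
              * falling_fact_step A T (s - j)) * falling_fact_step A T N
   = falling_fact_step A T (N + s)"
proof -
  have "(\<Sum>j\<le>s. of_nat (s choose j) * falling_fact_step A (- (of_nat N * A)) j
                 * falling_fact_step A T (s - j)) = falling_fact_step A (T - of_nat N * A) s"
    using falling_fact_step_vandermonde[of A "- (of_nat N * A)" T s] by simp
  then show ?thesis by (simp add: falling_fact_step_add mult.commute)
qed

lemma choose_mult_choose_commute: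
  assumes "j + l \<le> k"
  shows "(k choose j) * ((k - j) choose l) = (k choose l) * ((k - l) choose j)"
proof -
  have "real ((k choose j) * ((k - j) choose l)) = fact k / (fact j * fact l * fact (k - j - l))"
    using assms by (simp add: binomial_fact field_simps)
  also have "\<dots> = real ((k choose l) * ((k - l) choose j))"
    using assms by (simp add: binomial_fact field_simps diff_commute)
  finally show ?thesis by (simp only: of_nat_eq_iff)
qed

lemma falling_fact_step_divided_power_identity:
  fixes A T :: "'a::comm_ring_1"
  shows "(\<Sum>j\<le>k. \<Sum>l\<le>k - j.
            of_int ((-1) ^ (j + l) * pochhammer (int (l + n)) j * int ((k choose j) * ((k - j) choose l)))
            * A ^ j * (falling_fact_step A T (k - j - l) * falling_fact_step A T (l + n)))
         = (if k = 0 then falling_fact_step A T n else 0)"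
proof -
  define F where "F l j = ((-1) ^ l * of_nat (k choose l) * falling_fact_step A T (l + n)) *
      (of_nat ((k - l) choose j) * falling_fact_step A (- (of_nat (l + n) * A)) j
       * falling_fact_step A T (k - l - j))" for l j
  have "(\<Sum>j\<le>k. \<Sum>l\<le>k - j.
            of_int ((-1) ^ (j + l) * pochhammer (int (l + n)) j * int ((k choose j) * ((k - j) choose l)))
            * A ^ j * (falling_fact_step A T (k - j - l) * falling_fact_step A T (l + n)))
        = (\<Sum>j\<le>k. \<Sum>l\<le>k - j. F l j)"
  proof (intro sum.cong refl)
    fix j l assume "j \<in> {..k}" "l \<in> {..k - j}"
    then have "j + l \<le> k" by auto
    then show "of_int ((-1) ^ (j + l) * pochhammer (int (l + n)) j * int ((k choose j) * ((k - j) choose l)))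
            * A ^ j * (falling_fact_step A T (k - j - l) * falling_fact_step A T (l + n)) = F l j"
      unfolding F_def falling_fact_step_neg_multiple choose_mult_choose_commute[OF \<open>j + l \<le> k\<close>]
      by (simp add: power_add algebra_simps diff_commute)
  qed
  also have "\<dots> = (\<Sum>j\<le>k. \<Sum>l\<in>{l\<in>{..k}. j + l \<le> k}. F l j)"
    by (intro sum.cong refl) auto
  also have "\<dots> = (\<Sum>l\<le>k. \<Sum>j\<in>{j\<in>{..k}. j + l \<le> k}. F l j)"
    by (rule sum.swap_restrict) auto
  also have "\<dots> = (\<Sum>l\<le>k. \<Sum>j\<le>k - l. F l j)"
    by (intro sum.cong refl) auto
  also have "\<dots> = (\<Sum>l\<le>k. (-1) ^ l * of_nat (k choose l)) * falling_fact_step A T (k + n)"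
    unfolding sum_distrib_right
  proof (intro sum.cong refl)
    fix l assume "l \<in> {..k}"
    then have "l + n + (k - l) = k + n" by simp
    then show "(\<Sum>j\<le>k - l. F l j) = (-1) ^ l * of_nat (k choose l) * falling_fact_step A T (k + n)"
      using falling_fact_step_convolution_collapse[of "k - l" A "l + n" T]
      unfolding F_def sum_distrib_left[symmetric] by (simp add: algebra_simps)
  qed
  also have "\<dots> = (if k = 0 then falling_fact_step A T n else 0)"
    using choose_alternating_sum[of k, where 'a='a] by auto
  finally show ?thesis .
qed

definition poly_apply :: "('r::comm_ring_1 \<Rightarrow> 'm::ab_group_add \<Rightarrow> 'm) \<Rightarrow> ('m \<Rightarrow> 'm) \<Rightarrow> 'r poly \<Rightarrow> 'm \<Rightarrow> 'm" where
  "poly_apply scale f p x = (\<Sum>i\<le>degree p. scale (coeff p i) ((f ^^ i) x))"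

context
  fixes scale :: "'r::comm_ring_1 \<Rightarrow> 'm::ab_group_add \<Rightarrow> 'm" and f :: "'m \<Rightarrow> 'm"
  assumes hom: "module_hom scale scale f"
begin

interpretation F: module_hom scale scale f by (rule hom)

lemma poly_apply_eq_sum_lessThan:
  "degree p < N \<Longrightarrow> poly_apply scale f p x = (\<Sum>i<N. scale (coeff p i) ((f ^^ i) x))"
  unfolding poly_apply_def by (intro sum.mono_neutral_left) (auto simp: coeff_eq_0)

lemma poly_apply_0 [simp]: "poly_apply scale f 0 x = 0"
  by (simp add: poly_apply_def)

lemma poly_apply_const: "poly_apply scale f [:c:] x = scale c x"
  by (simp add: poly_apply_def)

lemma poly_apply_1: "poly_apply scale f 1 x = x"
  by (simp add: poly_apply_def)

lemma poly_apply_pCons: "poly_apply scale f (pCons c p) x = scale c x + f (poly_apply scale f p x)"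
proof -
  have "poly_apply scale f (pCons c p) x =
          (\<Sum>i<Suc (Suc (degree p)). scale (coeff (pCons c p) i) ((f ^^ i) x))"
    by (rule poly_apply_eq_sum_lessThan) (use degree_pCons_le[of c p] in linarith)
  also have "\<dots> = scale c x + (\<Sum>i<Suc (degree p). scale (coeff p i) (f ((f ^^ i) x)))"
    by (subst sum.lessThan_Suc_shift) simp
  also have "(\<Sum>i<Suc (degree p). scale (coeff p i) (f ((f ^^ i) x))) = f (poly_apply scale f p x)"
    by (simp add: poly_apply_eq_sum_lessThan[where N="Suc (degree p)"] F.sum F.scale
             del: sum.lessThan_Suc)
  finally show ?thesis .
qed

lemma poly_apply_X: "poly_apply scale f [:0, 1:] x = f x"
  by (simp add: poly_apply_pCons poly_apply_const)

lemma poly_apply_add: "poly_apply scale f (p + q) x = poly_apply scale f p x + poly_apply scale f q x"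
proof -
  define N where "N = Suc (max (degree p) (degree q))"
  have "degree (p + q) < N" unfolding N_def using degree_add_le_max[of p q] by linarith
  then show ?thesis
    by (simp add: poly_apply_eq_sum_lessThan[where N=N] N_def sum.distrib F.m1.scale_left_distrib
             del: sum.lessThan_Suc)
qed

lemma poly_apply_smult: "poly_apply scale f (smult c p) x = scale c (poly_apply scale f p x)"
proof -
  have "degree (smult c p) < Suc (degree p)" using degree_smult_le[of c p] by linarith
  then show ?thesis
    by (simp add: poly_apply_eq_sum_lessThan[where N="Suc (degree p)"] F.m1.scale_sum_right
             del: sum.lessThan_Suc)
qed

lemma poly_apply_diff: "poly_apply scale f (p - q) x = poly_apply scale f p x - poly_apply scale f q x"
proof -
  have "p - q = p + smult (-1) q" by simp
  then show ?thesis
    by (simp only: poly_apply_add poly_apply_smult F.m1.scale_minus_left F.m1.scale_one) simp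
qed

lemma poly_apply_sum: "poly_apply scale f (sum g S) x = (\<Sum>i\<in>S. poly_apply scale f (g i) x)"
  by (induction S rule: infinite_finite_induct) (auto simp: poly_apply_add)

lemma poly_apply_mult: "poly_apply scale f (p * q) x = poly_apply scale f p (poly_apply scale f q x)"
  by (induction p arbitrary: x rule: pCons_induct)
     (simp_all add: poly_apply_add poly_apply_smult poly_apply_pCons)

lemma fall_prod_eq_poly_apply:
  "fall_prod scale a f n x = poly_apply scale f (falling_fact_step [:a:] [:0, 1:] n) x"
proof (induction n arbitrary: x)
  case 0
  then show ?case by (simp add: poly_apply_1)
next
  case (Suc n)
  have "falling_fact_step [:a:] [:0, 1:] (Suc n) =
          ([:0, 1:] - [:of_nat n * a:]) * falling_fact_step [:a:] [:0, 1:] n"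
    by (simp add: falling_fact_step_Suc of_nat_poly mult.commute)
  then show ?case
    by (simp add: poly_apply_mult poly_apply_diff poly_apply_X poly_apply_const Suc
                  poly_apply_pCons poly_apply_smult)
qed

end

lemma rhs1_coeff_1:
  assumes "module scale" "\<phi> 0 = id"
  shows "rhs1_coeff scale a \<phi> n 1 x = \<phi> 1 (\<phi> n x) - \<phi> (Suc n) x - scale (of_nat n * a) (\<phi> n x)"
proof -
  interpret M: module scale by fact
  have "{..1::nat} = {0, 1}" "{..0::nat} = {0}" by auto
  then show ?thesis
    using assms(2) by (simp add: rhs1_coeff_def)
qed

lemma identity1_imp_fall_prod:
  fixes scale :: "'r::comm_ring_1 \<Rightarrow> 'm::ab_group_add \<Rightarrow> 'm" and \<phi> :: "nat \<Rightarrow> 'm \<Rightarrow> 'm"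
  assumes "module scale" "\<phi> 0 = id" "\<forall>n. identity1 scale a \<phi> n"
  shows "\<phi> n = fall_prod scale a (\<phi> 1) n"
proof (induction n)
  case 0
  show ?case using assms(2) by simp
next
  case (Suc n)
  interpret M: module scale by fact
  have "\<phi> (Suc n) x = \<phi> 1 (\<phi> n x) - scale (of_nat n * a) (\<phi> n x)" for x
    using assms(3) rhs1_coeff_1[where \<phi>=\<phi>, OF assms(1,2), of a n x]
    unfolding identity1_def by (simp add: algebra_simps)
  then show ?case by (simp add: Suc fun_eq_iff)
qed

lemma fall_prod_imp_identity1:
  fixes scale :: "'r::comm_ring_1 \<Rightarrow> 'm::ab_group_add \<Rightarrow> 'm" and \<phi> :: "nat \<Rightarrow> 'm \<Rightarrow> 'm"
  assumes hom: "module_hom scale scale (\<phi> 1)" and "\<phi> 0 = id"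
    and falling: "\<forall>n\<ge>1. \<phi> n = fall_prod scale a (\<phi> 1) n"
  shows "identity1 scale a \<phi> n"
  unfolding identity1_def
proof (intro allI)
  fix k x
  define P where "P = falling_fact_step [:a:] [:0::'r, 1:]"
  have \<phi>_eq: "\<phi> m y = poly_apply scale (\<phi> 1) (P m) y" for m y
  proof (cases "m = 0")
    case True
    then show ?thesis using \<open>\<phi> 0 = id\<close> poly_apply_1[OF hom] by (simp add: P_def)
  next
    case False
    then have "m \<ge> 1" by simp
    then have "\<phi> m = fall_prod scale a (\<phi> 1) m" using falling by blast
    then show ?thesis unfolding P_def by (simp only: fall_prod_eq_poly_apply[OF hom])
  qed
  define c where "c j l = of_int ((-1) ^ (j + l) * pochhammer (int (l + n)) j
                          * int ((k choose j) * ((k - j) choose l))) * a ^ j" for j l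
  have const_c: "[:c j l:] = of_int ((-1) ^ (j + l) * pochhammer (int (l + n)) j
                   * int ((k choose j) * ((k - j) choose l))) * [:a:] ^ j" for j l
    unfolding c_def poly_const_pow of_int_poly by simp
  have "rhs1_coeff scale a \<phi> n k x = (\<Sum>j\<le>k. \<Sum>l\<le>k - j.
          poly_apply scale (\<phi> 1) ([:c j l:] * (P (k - j - l) * P (l + n))) x)"
    unfolding rhs1_coeff_def c_def[symmetric]
    by (intro sum.cong refl)
       (simp only: poly_apply_mult[OF hom] poly_apply_const[OF hom] \<phi>_eq)
  also have "\<dots> = poly_apply scale (\<phi> 1) (\<Sum>j\<le>k. \<Sum>l\<le>k - j.
        of_int ((-1) ^ (j + l) * pochhammer (int (l + n)) j * int ((k choose j) * ((k - j) choose l)))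
        * [:a:] ^ j * (P (k - j - l) * P (l + n))) x"
    unfolding const_c[symmetric] poly_apply_sum[OF hom] ..
  also have "\<dots> = poly_apply scale (\<phi> 1) (if k = 0 then P n else 0) x"
    unfolding P_def falling_fact_step_divided_power_identity ..
  also have "\<dots> = (if k = 0 then \<phi> n x else 0)"
    using \<phi>_eq poly_apply_0[OF hom] by simp
  finally show "rhs1_coeff scale a \<phi> n k x = (if k = 0 then \<phi> n x else 0)" .
qed

theorem mainTheorem5:
  fixes p :: nat
    and scale :: "'r::comm_ring_1 \<Rightarrow> 'm::ab_group_add \<Rightarrow> 'm"
    and a :: 'r
    and \<phi> :: "nat \<Rightarrow> 'm \<Rightarrow> 'm"
  assumes "prime p"
    and "p_adically_complete_ring p TYPE('r)"
    and "module scale"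
    and "p_complete_module p scale"
    and "\<And>n. module_hom scale scale (\<phi> n)"
    and "\<phi> 0 = id"
  shows "(\<forall>n. identity1 scale a \<phi> n) \<longleftrightarrow>
         (\<forall>n\<ge>1. \<phi> n = fall_prod scale a (\<phi> 1) n)"
  using identity1_imp_fall_prod[where \<phi>=\<phi>, OF assms(3,6)]
    fall_prod_imp_identity1[where \<phi>=\<phi>, OF assms(5,6)]
  by blast

end
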